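(* Let $T$ be a node-weighted MFQST with Steiner point cost $c>0$. Let $P$ be a path $u=x_0,x_1,\dots,x_{p+1}=v$ in $T$ ($p\ge0$) whose interior nodes $x_1,\dots,x_p$ are all Steiner points of degree $2$. Let $f$ be the common flow on the edges of $P$. Then $$p(p+1)\le\frac{f\,|uv|^2}{c}\le(p+2)(p+1).$$
   Context: Let $Z=\{z_1,\dots,z_n\}\subset\mathbb{R}^2$ ($n\ge 1$) be a set of sources and $z_{BS}\in\mathbb{R}^2\setminus Z$ a sink; each source has supply $1$. A flow-dependent quadratic Steiner tree (FQST) consists of a finite set $S\subset\mathbb{R}^2$ of Steiner points and a tree $T$ with vertex set $Z\cup S\cup\{z_{BS}\}$ whose edges are directed towards $z_{BS}$. Every node other than the sink has exactly one out-edge, and the sink has none. Each edge $e$ carries a positive flow $f(e)$ such that: - at each source, the flow on its out-edge minus the total flow on its in-edges equals $1$; - at each Steiner point, the out-flow equals the total in-flow; - the sink receives total flow $n$. The cost is $L(T)=\sum_{e\in E(T)} f(e)|e|^2$. For a fixed $c>0$, a node-weighted MFQST is an FQST minimising $L_c(T)=L(T)+c|S|$ over all FQSTs (any finite $S$, any topology). *)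

theory Defs
  imports "HOL-Analysis.Analysis"
begin

type_synonym pt = "real^2"

text \<open>An FQST with sources Z and sink zb is given by a finite set S of Steiner
points, a successor map nx (the head of the unique out-edge of each non-sink node)
and a flow map fl (the flow on the out-edge of each non-sink node).
The tree property: every non-sink node reaches the sink by following out-edges.\<close>

definition in_nbrs :: "pt set \<Rightarrow> pt set \<Rightarrow> (pt \<Rightarrow> pt) \<Rightarrow> pt \<Rightarrow> pt set" where
  "in_nbrs Z S nx x = {y \<in> Z \<union> S. nx y = x}"

definition fqst :: "pt set \<Rightarrow> pt \<Rightarrow> pt set \<Rightarrow> (pt \<Rightarrow> pt) \<Rightarrow> (pt \<Rightarrow> real) \<Rightarrow> bool" where
  "fqst Z zb S nx fl \<longleftrightarrow>
     finite Z \<and> Z \<noteq> {} \<and> zb \<notin> Z \<and> finite S \<and> S \<inter> (Z \<union> {zb}) = {} \<and>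
     (\<forall>x \<in> Z \<union> S. nx x \<in> Z \<union> S \<union> {zb} \<and> fl x > 0 \<and> (\<exists>k. (nx ^^ k) x = zb)) \<and>
     (\<forall>z \<in> Z. fl z - (\<Sum>y\<in>in_nbrs Z S nx z. fl y) = 1) \<and>
     (\<forall>s \<in> S. fl s = (\<Sum>y\<in>in_nbrs Z S nx s. fl y)) \<and>
     (\<Sum>y\<in>in_nbrs Z S nx zb. fl y) = real (card Z)"

definition fq_cost :: "real \<Rightarrow> pt set \<Rightarrow> pt set \<Rightarrow> (pt \<Rightarrow> pt) \<Rightarrow> (pt \<Rightarrow> real) \<Rightarrow> real" where
  "fq_cost c Z S nx fl = (\<Sum>x\<in>Z \<union> S. fl x * (norm (x - nx x))\<^sup>2) + c * real (card S)"

definition mfqst :: "real \<Rightarrow> pt set \<Rightarrow> pt \<Rightarrow> pt set \<Rightarrow> (pt \<Rightarrow> pt) \<Rightarrow> (pt \<Rightarrow> real) \<Rightarrow> bool" where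
  "mfqst c Z zb S nx fl \<longleftrightarrow> fqst Z zb S nx fl \<and>
     (\<forall>S' nx' fl'. fqst Z zb S' nx' fl' \<longrightarrow> fq_cost c Z S nx fl \<le> fq_cost c Z S' nx' fl')"

definition adj :: "pt set \<Rightarrow> pt set \<Rightarrow> (pt \<Rightarrow> pt) \<Rightarrow> pt \<Rightarrow> pt \<Rightarrow> bool" where
  "adj Z S nx a b \<longleftrightarrow> (a \<in> Z \<union> S \<and> nx a = b) \<or> (b \<in> Z \<union> S \<and> nx b = a)"

definition degree :: "pt set \<Rightarrow> pt \<Rightarrow> pt set \<Rightarrow> (pt \<Rightarrow> pt) \<Rightarrow> pt \<Rightarrow> nat" where
  "degree Z zb S nx x = card {y \<in> Z \<union> S \<union> {zb}. adj Z S nx x y}"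

definition edge_flow :: "pt set \<Rightarrow> pt set \<Rightarrow> (pt \<Rightarrow> pt) \<Rightarrow> (pt \<Rightarrow> real) \<Rightarrow> pt \<Rightarrow> pt \<Rightarrow> real" where
  "edge_flow Z S nx fl a b = (if a \<in> Z \<union> S \<and> nx a = b then fl a else fl b)"

end

theory Submission
  imports Defs
begin

text \<open>
  Orient the path u = x 0, ..., x (Suc p) = v so that its edges point towards the sink; they
  all carry the flow f. For every q, replacing the p inner Steiner points by q fresh Steiner
  points on the segment uv gives another admissible tree. Comparing costs, with the chain
  points nearly equally spaced and the perturbation (needed to keep them fresh) tending to 0,
  yields f P + c p <= f |uv|^2/(q+1) + c q, where P is the sum of the squared edge lengths of
  the path. Since |uv|^2 <= (p+1) P by Cauchy-Schwarz, the choices q = p + 1 and q = p - 1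
  give the two bounds.
\<close>

lemma funpow_reaches_by_measure:
  fixes g :: "'a \<Rightarrow> 'a" and m :: "'a \<Rightarrow> nat"
  assumes closed: "\<And>w. w \<in> D \<Longrightarrow> g w \<in> D \<union> {z}"
    and decreasing: "\<And>w. w \<in> D \<Longrightarrow> g w \<noteq> z \<Longrightarrow> m (g w) < m w"
    and "w \<in> D"
  shows "\<exists>k. (g ^^ k) w = z"
  using \<open>w \<in> D\<close>
proof (induction "m w" arbitrary: w rule: less_induct)
  case less
  show ?case
  proof (cases "g w = z")
    case True
    then have "(g ^^ 1) w = z" by simp
    then show ?thesis by blast
  next
    case False
    then have "g w \<in> D" "m (g w) < m w" using closed decreasing less.prems by auto
    then obtain k where "(g ^^ k) (g w) = z" using less.hyps by blast
    then have "(g ^^ Suc k) w = z" by (simp add: funpow_Suc_right del: funpow.simps)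
    then show ?thesis by blast
  qed
qed

text \<open>Triangle inequality and Cauchy-Schwarz: the squared distance between the ends of a polygon
  with n + 1 edges is at most n + 1 times the sum of its squared edge lengths.\<close>

lemma sq_norm_endpoints_le:
  fixes x :: "nat \<Rightarrow> 'a::real_normed_vector"
  shows "(norm (x 0 - x (Suc n)))\<^sup>2 \<le> (real n + 1) * (\<Sum>i\<le>n. (norm (x i - x (Suc i)))\<^sup>2)"
proof -
  have "x 0 - x (Suc n) = (\<Sum>i\<le>n. x i - x (Suc i))"
    using sum_lessThan_telescope'[of x "Suc n"] by (simp add: lessThan_Suc_atMost)
  then have "norm (x 0 - x (Suc n)) \<le> (\<Sum>i\<le>n. norm (x i - x (Suc i)))"
    by (simp add: norm_sum)
  then have "(norm (x 0 - x (Suc n)))\<^sup>2 \<le> (\<Sum>i\<le>n. norm (x i - x (Suc i)))\<^sup>2"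
    by (intro power_mono) auto
  also have "\<dots> \<le> (\<Sum>i\<le>n. (norm (x i - x (Suc i)))\<^sup>2) * card {..n}"
    by (rule sum_squared_le_sum_of_squares)
  finally show ?thesis by (simp add: mult.commute add.commute)
qed

definition spaced_param :: "nat \<Rightarrow> real \<Rightarrow> nat \<Rightarrow> real" where
  "spaced_param q \<delta> j = real j / (real q + 1) + (if j \<in> {1..q} then \<delta> else 0)"

definition spaced_point :: "'a::real_vector \<Rightarrow> 'a \<Rightarrow> nat \<Rightarrow> real \<Rightarrow> nat \<Rightarrow> 'a" where
  "spaced_point u v q \<delta> j = u + spaced_param q \<delta> j *\<^sub>R (v - u)"

lemma spaced_point_ends [simp]:
  "spaced_point u v q \<delta> 0 = u" "spaced_point u v q \<delta> (Suc q) = v"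
  unfolding spaced_point_def spaced_param_def by (simp_all add: add.commute)

lemma spaced_param_strict_mono:
  assumes "0 \<le> \<delta>" "\<delta> < 1 / (real q + 1)" "i < j"
  shows "spaced_param q \<delta> i < spaced_param q \<delta> j"
proof -
  have "1 / (real q + 1) \<le> (real j - real i) / (real q + 1)"
    using \<open>i < j\<close> by (intro divide_right_mono) auto
  then show ?thesis
    using assms unfolding spaced_param_def by (auto simp: diff_divide_distrib)
qed

lemma spaced_point_inj:
  assumes "u \<noteq> v" "0 \<le> \<delta>" "\<delta> < 1 / (real q + 1)"
  shows "inj_on (spaced_point u v q \<delta>) {..Suc q}"
proof (rule inj_onI)
  fix i j assume "spaced_point u v q \<delta> i = spaced_point u v q \<delta> j"
  then have "spaced_param q \<delta> i = spaced_param q \<delta> j"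
    using \<open>u \<noteq> v\<close> by (simp add: spaced_point_def scaleR_cancel_right)
  then show "i = j"
    using spaced_param_strict_mono[OF assms(2,3), of i j] spaced_param_strict_mono[OF assms(2,3), of j i]
    by (metis less_irrefl nat_neq_iff)
qed

lemma spaced_point_avoids_finite:
  fixes V :: "'a::real_normed_vector set"
  assumes "finite V" "u \<noteq> v"
  shows "\<forall>\<^sub>F \<delta> in at_right 0. \<forall>j\<in>{1..q}. spaced_point u v q \<delta> j \<notin> V"
proof -
  define hit where "hit j = (\<lambda>t::real. u + (real j / (real q + 1) + t) *\<^sub>R (v - u)) -` V" for j
  have "finite (hit j)" for j
    unfolding hit_def using \<open>finite V\<close> \<open>u \<noteq> v\<close>
    by (intro finite_vimageI) (auto intro!: injI simp: scaleR_cancel_right)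
  then have "finite (\<Union>j\<in>{1..q}. hit j)" by blast
  then have "\<forall>\<^sub>F \<delta> in at_right 0. \<forall>t\<in>(\<Union>j\<in>{1..q}. hit j). \<delta> \<noteq> t"
    by (intro eventually_ball_finite) (auto intro: eventually_neq_at_within)
  then show ?thesis
    by eventually_elim (auto simp: hit_def spaced_point_def spaced_param_def)
qed

lemma spaced_point_cost_tendsto:
  fixes u v :: "'a::real_normed_vector"
  shows "((\<lambda>\<delta>. \<Sum>j\<le>q. (norm (spaced_point u v q \<delta> j - spaced_point u v q \<delta> (Suc j)))\<^sup>2)
           \<longlongrightarrow> (norm (u - v))\<^sup>2 / (real q + 1)) (at_right 0)"
proof -
  have param_cont: "isCont (\<lambda>\<delta>. spaced_param q \<delta> j) 0" for j
    unfolding spaced_param_def by (cases "j \<in> {1..q}") (simp_all del: atLeastAtMost_iff)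
  have step: "spaced_point u v q 0 j - spaced_point u v q 0 (Suc j) = (1 / (real q + 1)) *\<^sub>R (u - v)" for j
  proof -
    have "spaced_param q 0 (Suc j) - spaced_param q 0 j = 1 / (real q + 1)"
      unfolding spaced_param_def by (simp add: diff_divide_distrib[symmetric])
    then have "spaced_param q 0 j - spaced_param q 0 (Suc j) = - (1 / (real q + 1))"
      by linarith
    then have "spaced_point u v q 0 j - spaced_point u v q 0 (Suc j) = - (1 / (real q + 1)) *\<^sub>R (v - u)"
      unfolding spaced_point_def by (simp only: add_diff_add scaleR_diff_left[symmetric] diff_self add_0)
    then show ?thesis by (simp add: scaleR_minus_right[symmetric])
  qed
  have value_at_0: "(\<Sum>j\<le>q. (norm (spaced_point u v q 0 j - spaced_point u v q 0 (Suc j)))\<^sup>2)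
        = (norm (u - v))\<^sup>2 / (real q + 1)"
  proof -
    have "(norm ((1 / (real q + 1)) *\<^sub>R (u - v)))\<^sup>2 = (norm (u - v))\<^sup>2 / (real q + 1)\<^sup>2"
      by (simp add: power_divide)
    moreover have "(1 + real q) * ((norm (u - v))\<^sup>2 / (real q + 1)\<^sup>2) = (norm (u - v))\<^sup>2 / (real q + 1)"
      by (simp add: power2_eq_square add.commute[of 1])
    ultimately show ?thesis
      unfolding step by simp
  qed
  have "isCont (\<lambda>\<delta>. \<Sum>j\<le>q. (norm (spaced_point u v q \<delta> j - spaced_point u v q \<delta> (Suc j)))\<^sup>2) 0"
    unfolding spaced_point_def by (intro continuous_intros param_cont)
  then have "((\<lambda>\<delta>. \<Sum>j\<le>q. (norm (spaced_point u v q \<delta> j - spaced_point u v q \<delta> (Suc j)))\<^sup>2)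
              \<longlongrightarrow> (\<Sum>j\<le>q. (norm (spaced_point u v q 0 j - spaced_point u v q 0 (Suc j)))\<^sup>2)) (at_right 0)"
    by (rule tendsto_mono[OF at_within_le_at isContD])
  then show ?thesis unfolding value_at_0 .
qed

lemma bounds_from_replacements:
  fixes f c D P :: real and p :: nat
  assumes "f > 0" "c > 0" "D \<ge> 0" "D \<le> (real p + 1) * P"
    and replace: "\<And>q. f * P + c * p \<le> f * D / (real q + 1) + c * q"
  shows "real p * (real p + 1) \<le> f * D / c \<and> f * D / c \<le> (real p + 2) * (real p + 1)"
proof
  have fP: "f * D / (real p + 1) \<le> f * P"
    using assms(1,4) by (simp add: divide_simps mult_left_mono mult.commute)
  have "f * D / (real p + 1) + c * p \<le> f * D / (real p + 2) + c * (real p + 1)"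
    using replace[of "Suc p"] fP by (simp add: add.commute)
  then have "f * D * (1 / (real p + 1) - 1 / (real p + 2)) \<le> c"
    by (simp add: algebra_simps)
  moreover have "1 / (real p + 1) - 1 / (real p + 2) = 1 / ((real p + 2) * (real p + 1))"
    by (simp add: field_simps)
  ultimately have "f * D \<le> c * ((real p + 2) * (real p + 1))"
    by (simp add: pos_divide_le_eq)
  then show "f * D / c \<le> (real p + 2) * (real p + 1)"
    using \<open>c > 0\<close> by (simp add: pos_divide_le_eq mult.commute)
  show "real p * (real p + 1) \<le> f * D / c"
  proof (cases p)
    case 0
    then show ?thesis using assms(1-3) by simp
  next
    case (Suc m)
    have "f * D / (real p + 1) + c * p \<le> f * D / (real m + 1) + c * m"
      using replace[of m] fP by linarith
    then have "f * D / (real p + 1) + c * p \<le> f * D / real p + c * (real p - 1)"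
      using Suc by (simp add: add.commute)
    then have "c \<le> f * D * (1 / real p - 1 / (real p + 1))"
      by (simp add: algebra_simps)
    moreover have "1 / real p - 1 / (real p + 1) = 1 / (real p * (real p + 1))"
      using Suc by (simp add: field_simps)
    ultimately have "c * (real p * (real p + 1)) \<le> f * D"
      using Suc by (simp add: pos_le_divide_eq)
    then show ?thesis
      using \<open>c > 0\<close> by (simp add: pos_le_divide_eq mult.commute)
  qed
qed

lemma interval_propagate:
  fixes P :: "nat \<Rightarrow> bool"
  assumes "k \<le> n" "P k"
    and up: "\<And>i. i < n \<Longrightarrow> P i \<Longrightarrow> P (Suc i)"
    and down: "\<And>i. i < n \<Longrightarrow> P (Suc i) \<Longrightarrow> P i"
    and "i \<le> n"
  shows "P i"
proof -
  have "P (k - j)" if "j \<le> k" for j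
    using that
  proof (induction j)
    case (Suc j)
    then have "P (Suc (k - Suc j))" by (simp add: Suc_diff_Suc)
    then show ?case using down Suc.prems \<open>k \<le> n\<close> by simp
  qed (simp add: \<open>P k\<close>)
  then have "P 0" by (metis diff_self_eq_0 order_refl)
  show "P i"
    using \<open>i \<le> n\<close> by (induction i) (simp_all add: \<open>P 0\<close> up)
qed

locale fq_tree =
  fixes Z S :: "pt set" and zb :: pt and nx :: "pt \<Rightarrow> pt" and fl :: "pt \<Rightarrow> real"
  assumes fq: "fqst Z zb S nx fl"
begin

lemma finite_nodes: "finite Z" "finite S"
  using fq unfolding fqst_def by auto

lemma sink_not_node: "zb \<notin> Z \<union> S"
  using fq unfolding fqst_def by auto

lemma Steiner_not_source: "S \<inter> Z = {}"
  using fq unfolding fqst_def by auto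

lemma nx_closed: "w \<in> Z \<union> S \<Longrightarrow> nx w \<in> Z \<union> S \<union> {zb}"
  using fq unfolding fqst_def by auto

lemma flow_pos: "w \<in> Z \<union> S \<Longrightarrow> fl w > 0"
  using fq unfolding fqst_def by auto

lemma reaches_sink: "w \<in> Z \<union> S \<Longrightarrow> \<exists>k. (nx ^^ k) w = zb"
  using fq unfolding fqst_def by auto

text \<open>The depth of a node is its number of edges to the sink; it drops along every edge.
  This is what rules out directed cycles.\<close>

definition depth :: "pt \<Rightarrow> nat" where
  "depth w = (LEAST k. (nx ^^ k) w = zb)"

lemma depth_decreases:
  assumes "w \<in> Z \<union> S"
  shows "depth (nx w) < depth w"
proof -
  obtain k where "(nx ^^ k) w = zb" using reaches_sink[OF assms] by blast
  then have at_sink: "(nx ^^ depth w) w = zb"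
    unfolding depth_def by (rule LeastI)
  have "depth w \<noteq> 0"
  proof
    assume "depth w = 0"
    then have "w = zb" using at_sink by simp
    then show False using assms sink_not_node by blast
  qed
  then obtain m where m: "depth w = Suc m" using not0_implies_Suc by blast
  then have "(nx ^^ m) (nx w) = zb"
    using at_sink by (simp add: funpow_Suc_right del: funpow.simps)
  then have "depth (nx w) \<le> m"
    unfolding depth_def by (rule Least_le)
  then show ?thesis using m by simp
qed

lemma no_2_cycle: "a \<in> Z \<union> S \<Longrightarrow> b \<in> Z \<union> S \<Longrightarrow> nx a = b \<Longrightarrow> nx b \<noteq> a"
  using depth_decreases[of a] depth_decreases[of b] by auto

lemma adj_sym: "adj Z S nx a b = adj Z S nx b a"
  unfolding adj_def by auto

lemma adj_nodes: "adj Z S nx a b \<Longrightarrow> a \<in> Z \<union> S \<union> {zb} \<and> b \<in> Z \<union> S \<union> {zb}"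
  unfolding adj_def using nx_closed by blast

lemma edge_flow_sym: "adj Z S nx a b \<Longrightarrow> edge_flow Z S nx fl a b = edge_flow Z S nx fl b a"
  unfolding adj_def edge_flow_def using no_2_cycle by metis

end

locale deg2_path = fq_tree +
  fixes p :: nat and x :: "nat \<Rightarrow> pt" and f :: real
  assumes path_inj: "inj_on x {..Suc p}"
    and path_adj: "\<And>i. i \<le> p \<Longrightarrow> adj Z S nx (x i) (x (Suc i))"
    and path_inner: "\<And>i. i \<in> {1..p} \<Longrightarrow> x i \<in> S \<and> degree Z zb S nx (x i) = 2"
    and path_flow: "\<And>i. i \<le> p \<Longrightarrow> edge_flow Z S nx fl (x i) (x (Suc i)) = f"
begin

lemma path_distinct: "i \<le> Suc p \<Longrightarrow> j \<le> Suc p \<Longrightarrow> i \<noteq> j \<Longrightarrow> x i \<noteq> x j"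
  using path_inj unfolding inj_on_def by auto

lemma inner_neighbours:
  assumes "i \<in> {1..p}"
  shows "{w \<in> Z \<union> S \<union> {zb}. adj Z S nx (x i) w} = {x (i - 1), x (Suc i)}"
proof -
  let ?N = "{w \<in> Z \<union> S \<union> {zb}. adj Z S nx (x i) w}"
  have "Suc (i - 1) = i" using assms by simp
  then have "adj Z S nx (x (i - 1)) (x i)"
    using path_adj[of "i - 1"] assms by simp
  then have "x (i - 1) \<in> ?N" using adj_sym adj_nodes by blast
  moreover have "x (Suc i) \<in> ?N" using path_adj[of i] adj_nodes assms by auto
  moreover have "x (i - 1) \<noteq> x (Suc i)" using path_distinct assms by auto
  moreover have "finite ?N" "card ?N = 2"
    using finite_nodes path_inner[OF assms] unfolding degree_def by auto
  ultimately show ?thesis by (intro card_subset_eq[symmetric]) auto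
qed

abbreviation forward :: "nat \<Rightarrow> bool" where
  "forward i \<equiv> x i \<in> Z \<union> S \<and> nx (x i) = x (Suc i)"

lemma forward_step:
  assumes "i < p" "forward i"
  shows "forward (Suc i)"
proof -
  have inner: "Suc i \<in> {1..p}" using assms by simp
  then have "x (Suc i) \<in> S" using path_inner by blast
  then have "nx (x (Suc i)) \<in> {w \<in> Z \<union> S \<union> {zb}. adj Z S nx (x (Suc i)) w}"
    using nx_closed unfolding adj_def by auto
  then have "nx (x (Suc i)) \<in> {x (Suc i - 1), x (Suc (Suc i))}"
    unfolding inner_neighbours[OF inner] .
  then have "nx (x (Suc i)) \<in> {x i, x (Suc (Suc i))}" by simp
  moreover have "nx (x (Suc i)) \<noteq> x i"
    using no_2_cycle assms(2) \<open>x (Suc i) \<in> S\<close> by blast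
  ultimately show ?thesis using \<open>x (Suc i) \<in> S\<close> by auto
qed

lemma backward_step:
  assumes "i < p" "forward (Suc i)"
  shows "forward i"
proof -
  have "x (Suc (Suc i)) \<noteq> x i" using path_distinct assms(1) by simp
  then show ?thesis
    using path_adj[of i] assms unfolding adj_def by auto
qed

lemma forward_everywhere:
  assumes "k \<le> p" "forward k" "i \<le> p"
  shows "forward i"
  using interval_propagate[of k p forward i] assms forward_step backward_step by blast

lemma reverse: "deg2_path Z S zb nx fl p (\<lambda>i. x (Suc p - i)) f"
proof unfold_locales
  show "inj_on (\<lambda>i. x (Suc p - i)) {..Suc p}"
  proof (rule inj_onI)
    fix i j assume ij: "i \<in> {..Suc p}" "j \<in> {..Suc p}" "x (Suc p - i) = x (Suc p - j)"
    then have "Suc p - i = Suc p - j" using path_inj unfolding inj_on_def by auto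
    then show "i = j" using ij by auto
  qed
next
  fix i assume "i \<le> p"
  then have idx: "Suc p - i = Suc (p - i)" "Suc p - Suc i = p - i" by auto
  show "adj Z S nx (x (Suc p - i)) (x (Suc p - Suc i))"
    using path_adj[of "p - i"] adj_sym unfolding idx by simp
  show "edge_flow Z S nx fl (x (Suc p - i)) (x (Suc p - Suc i)) = f"
    using path_flow[of "p - i"] edge_flow_sym[OF path_adj[of "p - i"]] unfolding idx by simp
next
  fix i assume "i \<in> {1..p}"
  then have "Suc p - i \<in> {1..p}" by auto
  then show "x (Suc p - i) \<in> S \<and> degree Z zb S nx (x (Suc p - i)) = 2"
    by (rule path_inner)
qed

end

locale directed_path = deg2_path +
  assumes path_forward: "\<And>i. i \<le> p \<Longrightarrow> x i \<in> Z \<union> S \<and> nx (x i) = x (Suc i)"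

context deg2_path
begin

lemma orient:
  obtains x' where "directed_path Z S zb nx fl p x' f"
    and "norm (x' 0 - x' (Suc p)) = norm (x 0 - x (Suc p))"
proof (cases "forward 0")
  case True
  then have "directed_path Z S zb nx fl p x f"
    using forward_everywhere[of 0] by unfold_locales auto
  then show ?thesis using that by blast
next
  case False
  then have "x 1 \<in> Z \<union> S \<and> nx (x 1) = x 0"
    using path_adj[of 0] unfolding adj_def by auto
  then have "deg2_path.forward Z S nx (\<lambda>i. x (Suc p - i)) p" by simp
  then have "directed_path Z S zb nx fl p (\<lambda>i. x (Suc p - i)) f"
    using deg2_path.forward_everywhere[OF reverse, of p] reverse
    by (simp add: directed_path_def directed_path_axioms_def)
  moreover have "norm (x (Suc p - 0) - x (Suc p - Suc p)) = norm (x 0 - x (Suc p))"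
    by (simp add: norm_minus_commute)
  ultimately show ?thesis using that by blast
qed

end

context directed_path
begin

lemma path_flow_value: "i \<le> p \<Longrightarrow> fl (x i) = f"
  using path_flow path_forward unfolding edge_flow_def by auto

lemma path_flow_pos: "f > 0"
  using path_flow_value[of 0] path_forward[of 0] flow_pos by auto

lemma path_end_node: "x (Suc p) \<in> Z \<union> S \<union> {zb}"
  using path_forward[of p] nx_closed[of "x p"] by auto

lemma inner_pred_unique:
  assumes "w \<in> Z \<union> S" "nx w = x i" "i \<in> {1..p}"
  shows "w = x (i - 1)"
proof -
  have "adj Z S nx (x i) w" using assms unfolding adj_def by auto
  then have "w \<in> {x (i - 1), x (Suc i)}"
    using inner_neighbours[OF assms(3)] assms(1) by blast
  moreover have "w \<noteq> x (Suc i)"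
    using no_2_cycle[of "x i" w] path_forward[of i] assms by auto
  ultimately show ?thesis by auto
qed

lemma depth_along_path: "j \<le> Suc p \<Longrightarrow> depth (x j) + j \<le> depth (x 0)"
proof (induction j)
  case (Suc j)
  then have "depth (x (Suc j)) < depth (x j)"
    using depth_decreases path_forward[of j] by force
  then show ?case using Suc by simp
qed simp

end

locale reroute = directed_path +
  fixes q :: nat and y :: "nat \<Rightarrow> pt"
  assumes chain_start: "y 0 = x 0" and chain_end: "y (Suc q) = x (Suc p)"
    and chain_fresh: "\<And>j. j \<in> {1..q} \<Longrightarrow> y j \<notin> Z \<union> S \<union> {zb}"
    and chain_inj: "inj_on y {..Suc q}"
begin

definition old_inner :: "pt set" where "old_inner = x ` {1..p}"
definition new_inner :: "pt set" where "new_inner = y ` {1..q}"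
definition S_new :: "pt set" where "S_new = (S - old_inner) \<union> new_inner"

definition nx_new :: "pt \<Rightarrow> pt" where
  "nx_new w = (if w \<in> y ` {..q} then y (Suc (the_inv_into {..q} y w)) else nx w)"

definition fl_new :: "pt \<Rightarrow> real" where
  "fl_new w = (if w \<in> new_inner then f else fl w)"

text \<open>The nodes whose out-edge is the same in both trees.\<close>

definition kept :: "pt set" where "kept = (Z \<union> S) - old_inner - {x 0}"

lemma nx_new_chain: "j \<le> q \<Longrightarrow> nx_new (y j) = y (Suc j)"
  using the_inv_into_f_f[OF inj_on_subset[OF chain_inj]] unfolding nx_new_def by auto

lemma chain_image: "y ` {..q} = insert (x 0) new_inner"
proof -
  have "{..q} = insert 0 {1..q}" by auto
  then show ?thesis unfolding new_inner_def using chain_start by auto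
qed

lemma path_image: "x ` {..p} = insert (x 0) old_inner"
proof -
  have "{..p} = insert 0 {1..p}" by auto
  then show ?thesis unfolding old_inner_def by auto
qed

lemma new_inner_fresh: "new_inner \<inter> (Z \<union> S \<union> {zb}) = {}"
  using chain_fresh unfolding new_inner_def by blast

lemma old_inner_Steiner: "old_inner \<subseteq> S"
  using path_inner unfolding old_inner_def by auto

lemma ends_not_old_inner: "x 0 \<notin> old_inner" "x (Suc p) \<notin> old_inner"
  using path_distinct unfolding old_inner_def by fastforce+

lemma start_node: "x 0 \<in> Z \<union> S"
  using path_forward[of 0] by simp

lemma card_old_inner: "card old_inner = p"
  unfolding old_inner_def by (subst card_image) (auto intro: inj_on_subset[OF path_inj])

lemma card_new_inner: "card new_inner = q"
  unfolding new_inner_def by (subst card_image) (auto intro: inj_on_subset[OF chain_inj])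

lemma nodes_old: "Z \<union> S = kept \<union> x ` {..p}"
  using path_image old_inner_Steiner start_node unfolding kept_def by auto

lemma nodes_new: "Z \<union> S_new = kept \<union> y ` {..q}"
  using chain_image old_inner_Steiner start_node ends_not_old_inner Steiner_not_source
  unfolding kept_def S_new_def by auto

lemma kept_disjoint: "kept \<inter> x ` {..p} = {}" "kept \<inter> y ` {..q} = {}"
  using path_image chain_image new_inner_fresh unfolding kept_def by auto

lemma nx_new_kept: "w \<in> kept \<Longrightarrow> nx_new w = nx w"
  using kept_disjoint(2) unfolding nx_new_def by auto

lemma finite_parts: "finite kept" "finite new_inner" "finite old_inner"
  using finite_nodes unfolding kept_def new_inner_def old_inner_def by auto

lemma fl_new_chain: "j \<le> q \<Longrightarrow> fl_new (y j) = f"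
  using chain_start path_flow_value[of 0] ends_not_old_inner new_inner_fresh start_node
  unfolding fl_new_def new_inner_def by (cases "j = 0") auto

lemma fl_new_kept: "w \<in> kept \<Longrightarrow> fl_new w = fl w"
  using new_inner_fresh unfolding fl_new_def kept_def by auto

text \<open>A kept node never points into the old path interior, since each inner node's
  only in-neighbour is its path predecessor.\<close>

lemma kept_nx_not_old_inner:
  assumes "w \<in> kept"
  shows "nx w \<notin> old_inner"
proof
  assume "nx w \<in> old_inner"
  then obtain i where i: "i \<in> {1..p}" "nx w = x i" unfolding old_inner_def by blast
  then have "w = x (i - 1)" using inner_pred_unique assms unfolding kept_def by blast
  moreover have "i - 1 = 0 \<or> i - 1 \<in> {1..p}" using i by auto
  then have "x (i - 1) \<in> insert (x 0) old_inner"
    unfolding old_inner_def by auto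
  ultimately show False using assms unfolding kept_def by auto
qed

lemma path_preds:
  assumes "z \<notin> old_inner"
  shows "{w \<in> x ` {..p}. nx w = z} = (if z = x (Suc p) then {x p} else {})"
proof -
  have "nx (x i) = z \<longleftrightarrow> i = p \<and> z = x (Suc p)" if "i \<le> p" for i
  proof (cases "i = p")
    case False
    then have "x (Suc i) \<in> old_inner" using that unfolding old_inner_def by auto
    then show ?thesis using assms path_forward[OF that] False by auto
  qed (use path_forward in auto)
  then show ?thesis by auto
qed

lemma chain_preds:
  assumes "z \<notin> new_inner"
  shows "{w \<in> y ` {..q}. nx_new w = z} = (if z = x (Suc p) then {y q} else {})"
proof -
  have "nx_new (y j) = z \<longleftrightarrow> j = q \<and> z = x (Suc p)" if "j \<le> q" for j
  proof (cases "j = q")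
    case False
    then have "y (Suc j) \<in> new_inner" using that unfolding new_inner_def by auto
    then show ?thesis using assms nx_new_chain[OF that] False by auto
  qed (use nx_new_chain chain_end in auto)
  then show ?thesis by auto
qed

lemma chain_preds_inner:
  assumes "j \<in> {1..q}"
  shows "{w \<in> y ` {..q}. nx_new w = y j} = {y (j - 1)}"
proof -
  have "nx_new (y i) = y j \<longleftrightarrow> i = j - 1" if "i \<le> q" for i
    using that assms nx_new_chain[OF that] inj_onD[OF chain_inj, of "Suc i" j] by auto
  then show ?thesis using assms by auto
qed

lemma in_nbrs_old: "in_nbrs Z S nx z = {w \<in> kept. nx w = z} \<union> {w \<in> x ` {..p}. nx w = z}"
  unfolding in_nbrs_def using nodes_old by auto

lemma in_nbrs_new: "in_nbrs Z S_new nx_new z = {w \<in> kept. nx w = z} \<union> {w \<in> y ` {..q}. nx_new w = z}"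
  unfolding in_nbrs_def using nodes_new nx_new_kept by auto

text \<open>Away from the two replaced segments, a node receives the same in-flow in both trees:
  the contribution of the kept nodes is unchanged, and each segment delivers exactly
  the flow f, namely to x (Suc p).\<close>

lemma inflow_unchanged:
  assumes "z \<notin> old_inner" "z \<notin> new_inner"
  shows "(\<Sum>w\<in>in_nbrs Z S_new nx_new z. fl_new w) = (\<Sum>w\<in>in_nbrs Z S nx z. fl w)"
proof -
  let ?K = "{w \<in> kept. nx w = z}"
  have fin: "finite ?K" using finite_parts by simp
  have "(\<Sum>w\<in>in_nbrs Z S nx z. fl w)
        = (\<Sum>w\<in>?K. fl w) + (\<Sum>w\<in>{w \<in> x ` {..p}. nx w = z}. fl w)"
    unfolding in_nbrs_old by (rule sum.union_disjoint) (use fin kept_disjoint(1) in auto)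
  also have "\<dots> = (\<Sum>w\<in>?K. fl w) + (if z = x (Suc p) then f else 0)"
    unfolding path_preds[OF assms(1)] using path_flow_value[of p] by simp
  also have "(\<Sum>w\<in>?K. fl w) = (\<Sum>w\<in>?K. fl_new w)"
    using fl_new_kept by simp
  also have "(if z = x (Suc p) then f else 0) = (\<Sum>w\<in>{w \<in> y ` {..q}. nx_new w = z}. fl_new w)"
    unfolding chain_preds[OF assms(2)] using fl_new_chain[of q] by simp
  also have "(\<Sum>w\<in>?K. fl_new w) + \<dots> = (\<Sum>w\<in>in_nbrs Z S_new nx_new z. fl_new w)"
    unfolding in_nbrs_new by (rule sum.union_disjoint[symmetric]) (use fin kept_disjoint(2) in auto)
  finally show ?thesis by simp
qed

lemma inflow_new_inner:
  assumes "j \<in> {1..q}"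
  shows "(\<Sum>w\<in>in_nbrs Z S_new nx_new (y j). fl_new w) = f"
proof -
  have "nx w \<in> Z \<union> S \<union> {zb}" if "w \<in> kept" for w
    using that nx_closed unfolding kept_def by blast
  then have no_kept: "{w \<in> kept. nx w = y j} = {}"
    using chain_fresh[OF assms] by force
  show ?thesis
    unfolding in_nbrs_new chain_preds_inner[OF assms] no_kept
    using fl_new_chain[of "j - 1"] assms by auto
qed

lemma nx_new_closed:
  assumes "w \<in> Z \<union> S_new"
  shows "nx_new w \<in> Z \<union> S_new \<union> {zb}"
proof -
  have old_ok: "v \<in> Z \<union> S_new \<union> {zb}" if "v \<in> Z \<union> S \<union> {zb}" "v \<notin> old_inner" for v
    using that unfolding S_new_def by auto
  consider "w \<in> kept" | j where "j \<le> q" "w = y j" using assms nodes_new by auto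
  then show ?thesis
  proof cases
    case 1
    then have "nx_new w = nx w" by (rule nx_new_kept)
    then show ?thesis
      using old_ok nx_closed kept_nx_not_old_inner 1 unfolding kept_def by auto
  next
    case (2 j)
    show ?thesis
    proof (cases "j = q")
      case True
      then show ?thesis
        using 2 nx_new_chain chain_end old_ok path_end_node ends_not_old_inner by auto
    next
      case False
      then have "y (Suc j) \<in> new_inner" using 2 unfolding new_inner_def by auto
      then show ?thesis using 2 nx_new_chain unfolding S_new_def by auto
    qed
  qed
qed

lemma fl_new_pos: "w \<in> Z \<union> S_new \<Longrightarrow> fl_new w > 0"
  using path_flow_pos flow_pos unfolding fl_new_def S_new_def by auto

text \<open>The rank below strictly decreases along
  new edges: the new chain nodes are ranked just above x (Suc p), and old nodes deeper
  than x (Suc p) are shifted up by q to make room for them.\<close>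

definition rank :: "pt \<Rightarrow> nat" where
  "rank w = (if w \<in> new_inner then depth (x (Suc p)) + q + 1 - the_inv_into {1..q} y w
             else depth w + (if depth (x (Suc p)) < depth w then q else 0))"

lemma rank_chain: "j \<in> {1..q} \<Longrightarrow> rank (y j) = depth (x (Suc p)) + q + 1 - j"
  using the_inv_into_f_f[OF inj_on_subset[OF chain_inj]] unfolding rank_def new_inner_def by auto

lemma rank_decreases:
  assumes "w \<in> Z \<union> S_new" "nx_new w \<noteq> zb"
  shows "rank (nx_new w) < rank w"
proof -
  let ?e = "depth (x (Suc p))"
  consider "w \<in> kept" | j where "j \<le> q" "w = y j" using assms nodes_new by auto
  then show ?thesis
  proof cases
    case 1
    then have "w \<notin> new_inner" "nx w \<notin> new_inner" "nx_new w = nx w"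
      using new_inner_fresh nx_closed nx_new_kept[OF 1] 1 unfolding kept_def by auto
    moreover have "depth (nx w) < depth w" using 1 depth_decreases unfolding kept_def by auto
    ultimately show ?thesis unfolding rank_def by auto
  next
    case (2 j)
    have rank_w: "rank w \<ge> ?e + q + 1 - j"
    proof (cases "j = 0")
      case True
      then have "w = x 0" "x 0 \<notin> new_inner" using 2 chain_start start_node new_inner_fresh by auto
      then show ?thesis unfolding rank_def using depth_along_path[of "Suc p"] True by auto
    qed (use rank_chain 2 in auto)
    show ?thesis
    proof (cases "j = q")
      case True
      then have "nx_new w = x (Suc p)" "x (Suc p) \<notin> new_inner"
        using 2 nx_new_chain chain_end path_end_node new_inner_fresh by auto
      then show ?thesis using rank_w True unfolding rank_def by auto
    next
      case False
      then show ?thesis using 2 nx_new_chain rank_chain[of "Suc j"] rank_w by auto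
    qed
  qed
qed

lemma fqst_new: "fqst Z zb S_new nx_new fl_new"
proof -
  have outside: "z \<notin> old_inner" "z \<notin> new_inner" if "z \<in> Z \<union> {zb}" for z
    using that old_inner_Steiner Steiner_not_source sink_not_node new_inner_fresh by auto
  have reach: "\<exists>k. (nx_new ^^ k) w = zb" if "w \<in> Z \<union> S_new" for w
    using funpow_reaches_by_measure[of "Z \<union> S_new" nx_new zb rank] nx_new_closed rank_decreases that
    by blast
  have source: "fl_new z - (\<Sum>w\<in>in_nbrs Z S_new nx_new z. fl_new w) = 1" if "z \<in> Z" for z
    using that fq outside[of z] inflow_unchanged unfolding fqst_def fl_new_def by auto
  have Steiner: "fl_new s = (\<Sum>w\<in>in_nbrs Z S_new nx_new s. fl_new w)" if "s \<in> S_new" for s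
  proof (cases "s \<in> new_inner")
    case True
    then obtain j where "j \<in> {1..q}" "s = y j" unfolding new_inner_def by blast
    then show ?thesis using inflow_new_inner True unfolding fl_new_def by simp
  next
    case False
    then show ?thesis
      using that fq inflow_unchanged unfolding S_new_def fqst_def fl_new_def by auto
  qed
  have sink: "(\<Sum>w\<in>in_nbrs Z S_new nx_new zb. fl_new w) = real (card Z)"
    using fq outside[of zb] inflow_unchanged unfolding fqst_def by auto
  show ?thesis
    using fq finite_parts new_inner_fresh nx_new_closed fl_new_pos reach source Steiner sink
    unfolding fqst_def S_new_def by auto
qed

definition kept_cost :: real where
  "kept_cost = (\<Sum>w\<in>kept. fl w * (norm (w - nx w))\<^sup>2)"

lemma cost_old:
  "fq_cost c Z S nx fl = kept_cost + f * (\<Sum>i\<le>p. (norm (x i - x (Suc i)))\<^sup>2) + c * real (card S)"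
proof -
  have "(\<Sum>w\<in>Z \<union> S. fl w * (norm (w - nx w))\<^sup>2)
        = kept_cost + (\<Sum>w\<in>x ` {..p}. fl w * (norm (w - nx w))\<^sup>2)"
    unfolding kept_cost_def nodes_old
    by (rule sum.union_disjoint) (use finite_parts kept_disjoint in auto)
  also have "(\<Sum>w\<in>x ` {..p}. fl w * (norm (w - nx w))\<^sup>2) = (\<Sum>i\<le>p. fl (x i) * (norm (x i - nx (x i)))\<^sup>2)"
    by (rule sum.reindex[OF inj_on_subset[OF path_inj], unfolded comp_def]) auto
  also have "\<dots> = f * (\<Sum>i\<le>p. (norm (x i - x (Suc i)))\<^sup>2)"
    by (simp add: path_flow_value path_forward sum_distrib_left)
  finally show ?thesis unfolding fq_cost_def by simp
qed

lemma card_S_new: "real (card S_new) = real (card S) - p + q"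
proof -
  have "card S_new = card (S - old_inner) + card new_inner"
    unfolding S_new_def using finite_nodes finite_parts new_inner_fresh
    by (intro card_Un_disjoint) auto
  moreover have "card (S - old_inner) = card S - p" "p \<le> card S"
    using card_Diff_subset[OF _ old_inner_Steiner] card_mono[OF _ old_inner_Steiner]
      finite_parts finite_nodes card_old_inner by auto
  ultimately show ?thesis using card_new_inner by simp
qed

lemma cost_new:
  "fq_cost c Z S_new nx_new fl_new
     = kept_cost + f * (\<Sum>j\<le>q. (norm (y j - y (Suc j)))\<^sup>2) + c * (real (card S) - p + q)"
proof -
  have "(\<Sum>w\<in>Z \<union> S_new. fl_new w * (norm (w - nx_new w))\<^sup>2)
        = (\<Sum>w\<in>kept. fl_new w * (norm (w - nx_new w))\<^sup>2)
          + (\<Sum>w\<in>y ` {..q}. fl_new w * (norm (w - nx_new w))\<^sup>2)"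
    unfolding nodes_new by (rule sum.union_disjoint) (use finite_parts kept_disjoint in auto)
  also have "(\<Sum>w\<in>kept. fl_new w * (norm (w - nx_new w))\<^sup>2) = kept_cost"
    unfolding kept_cost_def using fl_new_kept nx_new_kept by (intro sum.cong) auto
  also have "(\<Sum>w\<in>y ` {..q}. fl_new w * (norm (w - nx_new w))\<^sup>2)
             = (\<Sum>j\<le>q. fl_new (y j) * (norm (y j - nx_new (y j)))\<^sup>2)"
    by (rule sum.reindex[OF inj_on_subset[OF chain_inj], unfolded comp_def]) auto
  also have "\<dots> = f * (\<Sum>j\<le>q. (norm (y j - y (Suc j)))\<^sup>2)"
    by (simp add: fl_new_chain nx_new_chain sum_distrib_left)
  finally show ?thesis unfolding fq_cost_def card_S_new by simp
qed

lemma reroute_cost_le: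
  assumes "mfqst c Z zb S nx fl"
  shows "f * (\<Sum>i\<le>p. (norm (x i - x (Suc i)))\<^sup>2) + c * p
         \<le> f * (\<Sum>j\<le>q. (norm (y j - y (Suc j)))\<^sup>2) + c * q"
proof -
  have "fq_cost c Z S nx fl \<le> fq_cost c Z S_new nx_new fl_new"
    using assms fqst_new unfolding mfqst_def by blast
  then show ?thesis unfolding cost_old cost_new by (simp add: algebra_simps)
qed

end

context directed_path
begin

text \<open>Comparing with rerouting through q nearly equally spaced points on the segment from
  x 0 to x (Suc p), and letting the perturbation tend to zero.\<close>

lemma replacement_bound:
  assumes "mfqst c Z zb S nx fl"
  shows "f * (\<Sum>i\<le>p. (norm (x i - x (Suc i)))\<^sup>2) + c * p
         \<le> f * (norm (x 0 - x (Suc p)))\<^sup>2 / (real q + 1) + c * q"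
proof -
  let ?pt = "\<lambda>\<delta>. spaced_point (x 0) (x (Suc p)) q \<delta>"
  have ends_differ: "x 0 \<noteq> x (Suc p)" using path_distinct by simp
  have small: "\<forall>\<^sub>F \<delta> in at_right 0. 0 \<le> \<delta> \<and> \<delta> < 1 / (real q + 1)"
    unfolding eventually_at_right_field by (intro exI[of _ "1 / (real q + 1)"]) auto
  have fresh: "\<forall>\<^sub>F \<delta> in at_right 0. \<forall>j\<in>{1..q}. ?pt \<delta> j \<notin> Z \<union> S \<union> {zb}"
    using finite_nodes by (intro spaced_point_avoids_finite ends_differ) auto
  have "\<forall>\<^sub>F \<delta> in at_right 0. f * (\<Sum>i\<le>p. (norm (x i - x (Suc i)))\<^sup>2) + c * p
          \<le> f * (\<Sum>j\<le>q. (norm (?pt \<delta> j - ?pt \<delta> (Suc j)))\<^sup>2) + c * q"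
    using small fresh
  proof eventually_elim
    case (elim \<delta>)
    interpret reroute Z S zb nx fl p x f q "?pt \<delta>"
      using elim ends_differ by unfold_locales (auto intro: spaced_point_inj)
    show ?case using reroute_cost_le[OF assms] .
  qed
  moreover have "((\<lambda>\<delta>. f * (\<Sum>j\<le>q. (norm (?pt \<delta> j - ?pt \<delta> (Suc j)))\<^sup>2) + c * q)
                  \<longlongrightarrow> f * ((norm (x 0 - x (Suc p)))\<^sup>2 / (real q + 1)) + c * q) (at_right 0)"
    by (intro tendsto_intros spaced_point_cost_tendsto)
  ultimately show ?thesis
    using tendsto_lowerbound trivial_limit_at_right_real by fastforce
qed

lemma endpoint_bounds:
  assumes "c > 0" "mfqst c Z zb S nx fl"
  shows "real p * (real p + 1) \<le> f * (norm (x 0 - x (Suc p)))\<^sup>2 / c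
       \<and> f * (norm (x 0 - x (Suc p)))\<^sup>2 / c \<le> (real p + 2) * (real p + 1)"
  by (rule bounds_from_replacements[OF path_flow_pos assms(1) zero_le_power2
        sq_norm_endpoints_le[of x p] replacement_bound[OF assms(2)]])

end

theorem mainTheorem13:
  fixes c :: real and Z S :: "pt set" and zb :: pt and nx :: "pt \<Rightarrow> pt"
    and fl :: "pt \<Rightarrow> real" and xs :: "pt list" and p :: nat and f :: real
  assumes "c > 0"
    and "mfqst c Z zb S nx fl"
    and "length xs = p + 2"
    and "distinct xs"
    and "\<forall>i < p + 1. adj Z S nx (xs ! i) (xs ! (i + 1))"
    and "\<forall>i \<in> {1..p}. xs ! i \<in> S \<and> degree Z zb S nx (xs ! i) = 2"
    and "\<forall>i < p + 1. edge_flow Z S nx fl (xs ! i) (xs ! (i + 1)) = f"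
  shows "real p * (real p + 1) \<le> f * (norm (xs ! 0 - xs ! (p + 1)))\<^sup>2 / c
       \<and> f * (norm (xs ! 0 - xs ! (p + 1)))\<^sup>2 / c \<le> (real p + 2) * (real p + 1)"
proof -
  have "deg2_path Z S zb nx fl p (nth xs) f"
  proof unfold_locales
    show "fqst Z zb S nx fl" using assms(2) unfolding mfqst_def by blast
    show "inj_on (nth xs) {..Suc p}" using assms(3,4) by (intro inj_on_nth) auto
  qed (use assms(5-7) in auto)
  then obtain x where "directed_path Z S zb nx fl p x f"
    and "norm (x 0 - x (Suc p)) = norm (xs ! 0 - xs ! (p + 1))"
    by (rule deg2_path.orient) simp
  then show ?thesis using directed_path.endpoint_bounds assms(1,2) by metis
qed

end
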